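(* Let $(G,I,O)$ be a geometry with a flow $(f,\preceq)$, and let $P_h=v_1\to\cdots\to v_{r}$ and $P_j=w_1\to\cdots\to w_{s}$ be two distinct paths of the path cover $\mathcal P_f$ (whose arcs are exactly the arcs $v\to f(v)$, $v\in O^c$). If $v_aw_b\in E(G)$ and $v_cw_d\in E(G)$ with $a<c$, then $b\le d$.
   Context: Graphs are finite, simple, undirected, without self-loops; $v\sim w$ denotes adjacency. A geometry is $(G,I,O)$ with $I,O\subseteq V(G)$; $O^c=V(G)\setminus O$, $I^c=V(G)\setminus I$. A flow for $(G,I,O)$ is a pair $(f,\preceq)$, $f:O^c\to I^c$, $\preceq$ a partial order on $V(G)$, with, for all $v\in O^c$, $w\in V(G)$: $v\sim f(v)$; $v\preceq f(v)$; $w\sim f(v)\Rightarrow v\preceq w$. For a flow, $f$ is injective and the arcs $v\to f(v)$ ($v\in O^c$) form a family $\mathcal P_f$ of vertex-disjoint directed paths covering $V(G)$, each ending in $O$. *)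

theory Defs
  imports Main
begin

definition simple_graph :: "'a set \<Rightarrow> ('a \<Rightarrow> 'a \<Rightarrow> bool) \<Rightarrow> bool" where
  "simple_graph V E \<longleftrightarrow> finite V \<and> (\<forall>v w. E v w \<longrightarrow> v \<in> V \<and> w \<in> V)
     \<and> (\<forall>v w. E v w \<longrightarrow> E w v) \<and> (\<forall>v. \<not> E v v)"

definition geometry :: "'a set \<Rightarrow> ('a \<Rightarrow> 'a \<Rightarrow> bool) \<Rightarrow> 'a set \<Rightarrow> 'a set \<Rightarrow> bool" where
  "geometry V E Inp Out \<longleftrightarrow> simple_graph V E \<and> Inp \<subseteq> V \<and> Out \<subseteq> V"

definition is_flow :: "'a set \<Rightarrow> ('a \<Rightarrow> 'a \<Rightarrow> bool) \<Rightarrow> 'a set \<Rightarrow> 'a set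
     \<Rightarrow> ('a \<Rightarrow> 'a) \<Rightarrow> 'a rel \<Rightarrow> bool" where
  "is_flow V E Inp Out f le \<longleftrightarrow>
     partial_order_on V le \<and>
     (\<forall>v \<in> V - Out. f v \<in> V - Inp) \<and>
     (\<forall>v \<in> V - Out. E v (f v)) \<and>
     (\<forall>v \<in> V - Out. (v, f v) \<in> le) \<and>
     (\<forall>v \<in> V - Out. \<forall>w \<in> V. E w (f v) \<longrightarrow> (v, w) \<in> le)"

text \<open>A path of the path cover P_f: a maximal directed path in the digraph with
  arcs v \<rightarrow> f v (v \<in> Out^c), listed from its first vertex to its last. Indices are 0-based.\<close>
definition flow_path :: "'a set \<Rightarrow> 'a set \<Rightarrow> ('a \<Rightarrow> 'a) \<Rightarrow> 'a list \<Rightarrow> bool" where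
  "flow_path V Out f P \<longleftrightarrow>
     P \<noteq> [] \<and> set P \<subseteq> V \<and>
     (\<forall>i. Suc i < length P \<longrightarrow> P ! i \<in> V - Out \<and> P ! Suc i = f (P ! i)) \<and>
     hd P \<notin> f ` (V - Out) \<and> last P \<in> Out"

end

theory Submission
  imports Defs
begin

(* Suppose d < b.  Then w_b = f(w_(b-1)) and v_c = f(v_(c-1)), so the
   flow condition "w ~ f(v) implies v <= w" applied to the edges v_a w_b and
   v_c w_d gives  w_(b-1) <= v_a  and  v_(c-1) <= w_d.  Since the order grows
   along each path (v <= f v), also  v_a <= v_(c-1)  and  w_d <= w_(b-1).  This
   closes the cycle  w_(b-1) <= v_a <= w_d <= w_(b-1), so antisymmetry yields
   v_a = w_d.  But two distinct paths of the cover are vertex-disjoint: walking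
   backwards, injectivity of f (a consequence of antisymmetry) and the fact that
   path heads have no f-preimage force equal indices and equal prefixes;
   walking forwards, both paths follow f until they reach Out. *)

lemma flow_order:
  assumes "is_flow V E Inp Out f le"
  shows flow_refl: "x \<in> V \<Longrightarrow> (x, x) \<in> le"
    and flow_trans: "(x, y) \<in> le \<Longrightarrow> (y, z) \<in> le \<Longrightarrow> (x, z) \<in> le"
    and flow_antisym: "(x, y) \<in> le \<Longrightarrow> (y, x) \<in> le \<Longrightarrow> x = y"
  using assms unfolding is_flow_def partial_order_on_def preorder_on_def
  by (auto simp: refl_on_def trans_def antisym_def)

lemma flow_below_neighbour:
  assumes "is_flow V E Inp Out f le" "v \<in> V - Out" "w \<in> V" "E w (f v)"
  shows "(v, w) \<in> le"
  using assms unfolding is_flow_def by blast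

text \<open>The successor function of a flow is injective on O^c: if f u = f v, then
  u and v are neighbours of each other's successor, hence comparable both ways.\<close>
lemma flow_inj:
  assumes flow: "is_flow V E Inp Out f le" and "u \<in> V - Out" "v \<in> V - Out" "f u = f v"
  shows "u = v"
proof -
  have "E u (f v)" "E v (f u)" using assms unfolding is_flow_def by (metis DiffI DiffD1 DiffD2)+
  with assms have "(v, u) \<in> le" "(u, v) \<in> le"
    by (auto intro!: flow_below_neighbour[OF flow])
  thus ?thesis using flow_antisym[OF flow] by blast
qed

lemma flow_path_step:
  assumes "flow_path V Out f P" "Suc i < length P"
  shows "P ! i \<in> V - Out" "P ! Suc i = f (P ! i)"
  using assms unfolding flow_path_def by auto

lemma flow_path_nth_in_V:
  assumes "flow_path V Out f P" "i < length P"
  shows "P ! i \<in> V"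
  using assms unfolding flow_path_def by auto

lemma flow_path_last:
  assumes "flow_path V Out f P" "Suc i = length P"
  shows "P ! i \<in> Out"
  using assms unfolding flow_path_def by (metis diff_Suc_1 last_conv_nth list.size(3) nat.distinct(1))

lemma flow_path_head:
  assumes "flow_path V Out f P" "v \<in> V - Out"
  shows "P ! 0 \<noteq> f v"
  using assms unfolding flow_path_def by (auto simp: hd_conv_nth)

lemma flow_path_mono:
  assumes flow: "is_flow V E Inp Out f le" and P: "flow_path V Out f P"
    and "i \<le> j" "j < length P"
  shows "(P ! i, P ! j) \<in> le"
  using assms(3,4)
proof (induction j rule: dec_induct)
  case base
  show ?case using flow_refl[OF flow flow_path_nth_in_V[OF P base]] .
next
  case (step j)
  have "(P ! j, P ! Suc j) \<in> le"
    using flow_path_step[OF P step.prems] flow unfolding is_flow_def by auto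
  with step show ?case by (auto intro: flow_trans[OF flow])
qed

lemma flow_path_neighbour_of_succ:
  assumes flow: "is_flow V E Inp Out f le" and G: "geometry V E Inp Out"
    and P: "flow_path V Out f P" and "Suc i < length P" and "E w (P ! Suc i)"
  shows "(P ! i, w) \<in> le"
proof -
  have "w \<in> V" using G assms(5) unfolding geometry_def simple_graph_def by blast
  thus ?thesis using flow_below_neighbour[OF flow] flow_path_step[OF P assms(4)] assms(5)
    by metis
qed

text \<open>Backwards: a common vertex occurs at the same index in both paths, and the
  prefixes up to it coincide (by injectivity of f and since heads have no preimage).\<close>
lemma flow_paths_meet_backward:
  assumes flow: "is_flow V E Inp Out f le"
    and P: "flow_path V Out f P" and Q: "flow_path V Out f Q"
  shows "i < length P \<Longrightarrow> j < length Q \<Longrightarrow> P ! i = Q ! j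
    \<Longrightarrow> i = j \<and> (\<forall>k\<le>i. P ! k = Q ! k)"
proof (induction i arbitrary: j)
  case 0
  show ?case
  proof (cases j)
    case (Suc j')
    with 0 show ?thesis using flow_path_head[OF P] flow_path_step[OF Q, of j'] by auto
  qed (use 0 in auto)
next
  case (Suc i)
  show ?case
  proof (cases j)
    case 0
    with Suc.prems have "Q ! 0 = f (P ! i)" "P ! i \<in> V - Out"
      using flow_path_step[OF P, of i] by auto
    with flow_path_head[OF Q] show ?thesis by blast
  next
    case (Suc j')
    with Suc.prems have "f (P ! i) = f (Q ! j')" "P ! i \<in> V - Out" "Q ! j' \<in> V - Out"
      using flow_path_step[OF P, of i] flow_path_step[OF Q, of j'] by auto
    hence "P ! i = Q ! j'" using flow_inj[OF flow] by blast
    with Suc Suc.prems Suc.IH[of j'] show ?thesis by (auto simp: le_Suc_eq)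
  qed
qed

text \<open>Forwards: once two paths share a vertex at the same index, the second path
  is at least as long as the first and agrees with it from there on, because a
  vertex that is not an output has the same successor on both paths.\<close>
lemma flow_paths_meet_forward:
  assumes P: "flow_path V Out f P" and Q: "flow_path V Out f Q"
    and "i < length Q" and "P ! i = Q ! i" and "i \<le> k" and "k < length P"
  shows "k < length Q \<and> P ! k = Q ! k"
  using assms(5,6)
proof (induction k rule: dec_induct)
  case base
  show ?case using assms(3,4) by simp
next
  case (step k)
  hence IH: "k < length Q" "P ! k = Q ! k" by auto
  have notout: "P ! k \<in> V - Out" "P ! Suc k = f (P ! k)" using flow_path_step[OF P step.prems] by auto
  have "Suc k \<noteq> length Q" using flow_path_last[OF Q, of k] notout IH by auto
  hence "Suc k < length Q" using IH by simp
  thus ?case using flow_path_step[OF Q] notout IH by auto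
qed

lemma flow_paths_disjoint:
  assumes flow: "is_flow V E Inp Out f le"
    and P: "flow_path V Out f P" and Q: "flow_path V Out f Q" and "P \<noteq> Q"
    and "i < length P" and "j < length Q"
  shows "P ! i \<noteq> Q ! j"
proof
  assume meet: "P ! i = Q ! j"
  then have ij: "i = j" and prefix: "\<forall>k\<le>i. P ! k = Q ! k"
    using flow_paths_meet_backward[OF flow P Q] assms(5,6) by blast+
  have PQ: "\<And>k. i \<le> k \<Longrightarrow> k < length P \<Longrightarrow> k < length Q \<and> P ! k = Q ! k"
    using flow_paths_meet_forward[OF P Q] assms(6) meet ij by blast
  have QP: "\<And>k. i \<le> k \<Longrightarrow> k < length Q \<Longrightarrow> k < length P"
    using flow_paths_meet_forward[OF Q P] assms(5) meet ij by metis
  have len: "length P = length Q"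
    using PQ[of "length P - 1"] QP[of "length Q - 1"] assms(5,6) ij by fastforce
  have "P = Q"
  proof (rule nth_equalityI[OF len])
    fix k assume "k < length P"
    thus "P ! k = Q ! k" using prefix PQ by (cases "k \<le> i") auto
  qed
  with assms(4) show False ..
qed

theorem mainTheorem7:
  fixes V :: "'a set" and E :: "'a \<Rightarrow> 'a \<Rightarrow> bool" and Inp Out :: "'a set"
    and f :: "'a \<Rightarrow> 'a" and le :: "'a rel" and P Q :: "'a list"
    and a b c d :: nat
  assumes "geometry V E Inp Out"
    and "is_flow V E Inp Out f le"
    and "flow_path V Out f P" and "flow_path V Out f Q" and "P \<noteq> Q"
    and "a < length P" and "c < length P" and "b < length Q" and "d < length Q"
    and "E (P ! a) (Q ! b)" and "E (P ! c) (Q ! d)"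
    and "a < c"
  shows "b \<le> d"
proof (rule ccontr)
  note G = assms(1) and flow = assms(2) and P = assms(3) and Q = assms(4)
  assume "\<not> b \<le> d"
  then obtain b' c' where b': "b = Suc b'" "d \<le> b'" and c': "c = Suc c'" "a \<le> c'"
    using assms(12) by (metis Suc_le_D not_le less_eq_Suc_le)
  have sym: "E (Q ! d) (P ! c)"
    using G assms(11) unfolding geometry_def simple_graph_def by blast
  have "(Q ! b', P ! a) \<in> le"
    using flow_path_neighbour_of_succ[OF flow G Q] b' assms(8,10) by simp
  moreover have "(P ! c', Q ! d) \<in> le"
    using flow_path_neighbour_of_succ[OF flow G P] c' assms(7) sym by simp
  moreover have "(P ! a, P ! c') \<in> le" "(Q ! d, Q ! b') \<in> le"
    using flow_path_mono[OF flow P] flow_path_mono[OF flow Q] b' c' assms(7,8) by auto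
  ultimately have "P ! a = Q ! d"
    by (meson flow_antisym[OF flow] flow_trans[OF flow])
  with flow_paths_disjoint[OF flow P Q assms(5,6,9)] show False ..
qed

end
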